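(* Let $n\ge1$ and $f\in L^2([0,1]^n)$. Let $V_L$ be the linear span in $L^2([0,1]^n)$ of $\mathrm{os}_1,\ldots,\mathrm{os}_n,\mathrm{os}_{n+1}$, and let $f_L$ be the (unique) element of $V_L$ minimizing $\|f-g\|^2=\int_{[0,1]^n}(f(\mathbf{x})-g(\mathbf{x}))^2\,d\mathbf{x}$ over $g\in V_L$. Then $f_L=\sum_{j=1}^{n+1}a_j\,\mathrm{os}_j$, where $$a_k=\begin{cases}\langle f,g_k\rangle, & \text{if } k\in\{1,\ldots,n\},\\ (n+1)^2\langle f,1\rangle-(n+1)(n+2)\langle f,\mathrm{os}_n\rangle, & \text{if } k=n+1,\end{cases}$$ with $g_k=-(n+1)(n+2)\,(\mathrm{os}_{k+1}-2\,\mathrm{os}_k+\mathrm{os}_{k-1})$.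
   Context: $L^2([0,1]^n)$ is the space of square integrable functions $[0,1]^n\to\mathbb{R}$ modulo equality almost everywhere, with inner product $\langle f,g\rangle=\int_{[0,1]^n}f(\mathbf{x})g(\mathbf{x})\,d\mathbf{x}$ (Lebesgue measure). For $\mathbf{x}\in[0,1]^n$, $x_{(1)}\le\cdots\le x_{(n)}$ denote its coordinates in ascending order, $\mathrm{os}_k(\mathbf{x})=x_{(k)}$ for $k\in\{1,\ldots,n\}$, and by convention $\mathrm{os}_0\equiv 0$ and $\mathrm{os}_{n+1}\equiv1$. *)

theory Defs
  imports "HOL-Analysis.Analysis" "HOL-Library.Multiset"
begin

definition unit_cube :: "(real^'n) set" where
  "unit_cube = {x. \<forall>i. 0 \<le> x $ i \<and> x $ i \<le> 1}"

text \<open>Order statistics: os k x is the k-th smallest coordinate (1 \<le> k \<le> n),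
  with os 0 = 0 and os (n+1) = 1 (and, irrelevantly, 1 for larger k).\<close>
definition os :: "nat \<Rightarrow> real^'n \<Rightarrow> real" where
  "os k x = (if k = 0 then 0 else if k > CARD('n) then 1
             else sorted_list_of_multiset (image_mset (\<lambda>i. x $ i) (mset_set UNIV)) ! (k - 1))"

definition L2_cube :: "(real^'n \<Rightarrow> real) set" where
  "L2_cube = {f. f \<in> borel_measurable (lebesgue_on unit_cube)
               \<and> integrable (lebesgue_on unit_cube) (\<lambda>x. (f x)\<^sup>2)}"

definition L2_inner :: "(real^'n \<Rightarrow> real) \<Rightarrow> (real^'n \<Rightarrow> real) \<Rightarrow> real" where
  "L2_inner f g = (\<integral>x. f x * g x \<partial>(lebesgue_on unit_cube))"

definition L2_dist2 :: "(real^'n \<Rightarrow> real) \<Rightarrow> (real^'n \<Rightarrow> real) \<Rightarrow> real" where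
  "L2_dist2 f g = (\<integral>x. (f x - g x)\<^sup>2 \<partial>(lebesgue_on unit_cube))"

definition V_L :: "(real^'n \<Rightarrow> real) set" where
  "V_L = {g. \<exists>c :: nat \<Rightarrow> real. g = (\<lambda>x. \<Sum>j=1..CARD('n)+1. c j * os j x)}"

definition g_fun :: "nat \<Rightarrow> real^'n \<Rightarrow> real" where
  "g_fun k x = - (real CARD('n) + 1) * (real CARD('n) + 2)
                 * (os (k+1) x - 2 * os k x + os (k-1) x)"

definition coef :: "(real^'n \<Rightarrow> real) \<Rightarrow> nat \<Rightarrow> real" where
  "coef f k = (if k \<le> CARD('n) then L2_inner f (g_fun k :: real^'n \<Rightarrow> real)
     else (real CARD('n) + 1)\<^sup>2 * L2_inner f (\<lambda>_. 1)
          - (real CARD('n) + 1) * (real CARD('n) + 2) * L2_inner f (os CARD('n)))"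

end

theory Submission
  imports Defs
begin

text \<open>
  The minimiser \<open>P = \<Sum>\<^sub>j coef f j \<cdot> os\<^sub>j\<close> is characterised by the normal equations
  \<open>\<langle>P, os\<^sub>k\<rangle> = \<langle>f, os\<^sub>k\<rangle>\<close>, after which Pythagoras gives
  \<open>\<parallel>f - g\<parallel>\<^sup>2 = \<parallel>f - P\<parallel>\<^sup>2 + \<parallel>P - g\<parallel>\<^sup>2\<close> for every \<open>g \<in> V_L\<close>.
  The normal equations hold because \<open>g\<^sub>1, \<dots>, g\<^sub>n\<close> together with
  \<open>(n+1)\<^sup>2 - (n+1)(n+2) os\<^sub>n\<close> form the basis dual to \<open>os\<^sub>1, \<dots>, os\<^sub>n\<^sub>+\<^sub>1\<close>: the Gram matrix is
  \<open>\<langle>os\<^sub>i, os\<^sub>j\<rangle> = min i j (max i j + 1) / ((n+1)(n+2))\<close>, whose inverse is a second difference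
  operator, checked by summation by parts.

  The Gram entries come from \<open>os\<^sub>i os\<^sub>j = \<integral>\<integral> [s < os\<^sub>i] [t < os\<^sub>j] ds dt\<close> and Fubini: \<open>s < os\<^sub>i\<close>
  iff fewer than \<open>i\<close> coordinates are \<open>\<le> s\<close>, so for \<open>s \<le> t\<close> the inner integral over the cube is
  a trinomial probability, and integrating it over the triangle \<open>s \<le> t\<close> (Beta integrals) each
  admissible pair of counts contributes \<open>n! / (n+2)!\<close>.
\<close>

section \<open>Order statistics as counting functions\<close>

lemma sorted_nth_le_iff_length_filter:
  fixes L :: "real list"
  assumes "sorted L" "i < length L"
  shows "L ! i \<le> t \<longleftrightarrow> i < length (filter (\<lambda>v. v \<le> t) L)"
  using assms
proof (induction L arbitrary: i)
  case Nil then show ?case by simp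
next
  case (Cons a L)
  show ?case
  proof (cases "a \<le> t")
    case True
    then show ?thesis using Cons by (cases i) auto
  next
    case False
    then have above: "\<forall>v\<in>set (a # L). t < v" using Cons.prems(1) by auto
    then have "filter (\<lambda>v. v \<le> t) (a # L) = []" by (auto simp: filter_empty_conv)
    moreover have "t < (a # L) ! i" using above Cons.prems(2) nth_mem by blast
    ultimately show ?thesis by simp
  qed
qed

definition count_le :: "real^'n \<Rightarrow> real \<Rightarrow> nat" where
  "count_le x t = card {m. x $ m \<le> t}"

definition sorted_coords :: "real^'n \<Rightarrow> real list" where
  "sorted_coords x = sorted_list_of_multiset (image_mset (\<lambda>i. x $ i) (mset_set UNIV))"

lemma os_eq_nth_sorted_coords:
  "1 \<le> k \<Longrightarrow> k \<le> CARD('n) \<Longrightarrow> os k (x :: real^'n) = sorted_coords x ! (k - 1)"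
  by (simp add: os_def sorted_coords_def)

lemma os_0 [simp]: "os 0 x = 0"
  by (simp add: os_def)

lemma os_Suc_card [simp]: "os (Suc CARD('n)) (x :: real^'n) = 1"
  by (simp add: os_def)

lemma sorted_coords:
  fixes x :: "real^'n"
  shows "sorted (sorted_coords x)" "length (sorted_coords x) = CARD('n)"
    "set (sorted_coords x) = range (\<lambda>i. x $ i)"
    "length (filter (\<lambda>v. v \<le> t) (sorted_coords x)) = count_le x t"
proof -
  have mset: "mset (sorted_coords x) = image_mset (\<lambda>i. x $ i) (mset_set UNIV)"
    by (simp add: sorted_coords_def)
  show "sorted (sorted_coords x)" "set (sorted_coords x) = range (\<lambda>i. x $ i)"
    by (simp_all add: sorted_coords_def)
  show "length (sorted_coords x) = CARD('n)"
    by (metis mset size_image_mset size_mset size_mset_set)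
  have "length (filter (\<lambda>v. v \<le> t) (sorted_coords x))
      = size (filter_mset (\<lambda>v. v \<le> t) (mset (sorted_coords x)))"
    by (metis mset_filter size_mset)
  also have "\<dots> = size (mset_set {m. x $ m \<le> t})"
    by (simp add: mset filter_mset_image_mset)
  finally show "length (filter (\<lambda>v. v \<le> t) (sorted_coords x)) = count_le x t"
    by (simp add: count_le_def)
qed

lemma os_le_iff_count_le:
  fixes x :: "real^'n"
  assumes "1 \<le> k" "k \<le> CARD('n)"
  shows "os k x \<le> t \<longleftrightarrow> k \<le> count_le x t"
  using sorted_nth_le_iff_length_filter[of "sorted_coords x" "k - 1" t] sorted_coords[where x=x] assms
  by (auto simp: os_eq_nth_sorted_coords)

lemma less_os_iff_count_le:
  fixes x :: "real^'n"
  assumes "k \<le> CARD('n) + 1" "0 \<le> s" "s < 1"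
  shows "s < os k x \<longleftrightarrow> count_le x s < k"
proof -
  have "count_le x s \<le> CARD('n)" unfolding count_le_def by (simp add: card_mono)
  then show ?thesis using assms os_le_iff_count_le[of k x s]
    by (cases "k = 0"; cases "k = CARD('n) + 1") (auto simp: os_def not_le)
qed

lemma os_bounds:
  fixes x :: "real^'n"
  assumes "x \<in> unit_cube"
  shows "0 \<le> os k x" "os k x \<le> 1"
proof -
  have "os k x \<in> range (\<lambda>i. x $ i)" if "1 \<le> k" "k \<le> CARD('n)"
    using that nth_mem[of "k - 1" "sorted_coords x"] sorted_coords[where x=x]
    by (simp add: os_eq_nth_sorted_coords)
  then have "0 \<le> os k x \<and> os k x \<le> 1"
    using assms by (cases "k = 0"; cases "k \<le> CARD('n)") (auto simp: os_def unit_cube_def)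
  then show "0 \<le> os k x" "os k x \<le> 1" by auto
qed

lemma count_le_ge_eq_Union:
  "{x :: real^'n. k \<le> count_le x t} = (\<Union>S\<in>{S. card S = k}. \<Inter>m\<in>S. {x. x $ m \<le> t})"
proof (intro set_eqI iffI)
  fix x :: "real^'n" assume "x \<in> {x. k \<le> count_le x t}"
  then obtain S where "S \<subseteq> {m. x $ m \<le> t}" "card S = k"
    unfolding count_le_def by (auto elim: obtain_subset_with_card_n)
  then show "x \<in> (\<Union>S\<in>{S. card S = k}. \<Inter>m\<in>S. {x. x $ m \<le> t})" by auto
next
  fix x :: "real^'n" assume "x \<in> (\<Union>S\<in>{S. card S = k}. \<Inter>m\<in>S. {x. x $ m \<le> t})"
  then obtain S where "card S = k" "S \<subseteq> {m. x $ m \<le> t}" by auto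
  then show "x \<in> {x. k \<le> count_le x t}"
    unfolding count_le_def by (metis card_mono finite mem_Collect_eq)
qed

lemma os_borel [measurable]: "os k \<in> borel_measurable (borel :: (real^'n) measure)"
proof (cases "1 \<le> k \<and> k \<le> CARD('n)")
  case False
  then have "os k = (\<lambda>x::real^'n. if k = 0 then 0 else 1)" by (auto simp: os_def fun_eq_iff)
  then show ?thesis by simp
next
  case True
  show ?thesis unfolding borel_measurable_iff_le
  proof
    fix t
    have "{x \<in> space (borel :: (real^'n) measure). os k x \<le> t} = {x. k \<le> count_le x t}"
      using os_le_iff_count_le[of k _ t] True by auto
    also have "\<dots> = (\<Union>S\<in>{S. card S = k}. \<Inter>m\<in>S. {x. x $ m \<le> t})"
      by (rule count_le_ge_eq_Union)
    also have "closed \<dots>"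
      by (intro closed_UN closed_INT ballI closed_halfspace_component_le_cart) simp
    finally show "{x \<in> space (borel :: (real^'n) measure). os k x \<le> t} \<in> sets borel" by (rule borel_closed)
  qed
qed

section \<open>The joint law of two threshold counts\<close>

definition count_prob :: "nat \<Rightarrow> nat \<Rightarrow> nat \<Rightarrow> real \<Rightarrow> real \<Rightarrow> real" where
  "count_prob n i j s t = (\<Sum>b\<le>n. \<Sum>a\<le>b. if a < i \<and> b < j then
     real (n choose b) * real (b choose a) * (s ^ a * (t - s) ^ (b - a) * (1 - t) ^ (n - b)) else 0)"

lemma count_prob_nonneg: "0 \<le> s \<Longrightarrow> s \<le> t \<Longrightarrow> t \<le> 1 \<Longrightarrow> 0 \<le> count_prob n i j s t"
  unfolding count_prob_def by (intro sum_nonneg) auto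

lemma count_prob_measurable [measurable (raw)]:
  assumes [measurable]: "f \<in> borel_measurable M" "g \<in> borel_measurable M"
  shows "(\<lambda>x. count_prob n i j (f x) (g x)) \<in> borel_measurable M"
  unfolding count_prob_def by measurable

definition cell :: "real \<Rightarrow> real \<Rightarrow> 'n set \<Rightarrow> 'n set \<Rightarrow> 'n \<Rightarrow> real set" where
  "cell s t A B m = (if m \<in> A then {0..s} else if m \<in> B then {s<..t} else {t<..1})"

lemma prod_indicator_eq:
  "(\<Prod>m\<in>UNIV. indicator (P m) (x $ m) :: 'a::comm_semiring_1) = (if \<forall>m. x $ m \<in> P m then 1 else 0)"
proof (cases "\<forall>m. x $ m \<in> P m")
  case False
  then obtain m where "x $ m \<notin> P m" by auto
  then show ?thesis by (auto intro!: prod_zero exI[of _ m])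
qed simp

lemma mem_cell_iff:
  fixes x :: "real^'n"
  assumes "A \<subseteq> B" "0 \<le> s" "s \<le> t" "t \<le> 1"
  shows "(\<forall>m. x $ m \<in> cell s t A B m) \<longleftrightarrow>
           x \<in> unit_cube \<and> {m. x $ m \<le> s} = A \<and> {m. x $ m \<le> t} = B"
proof
  assume x: "\<forall>m. x $ m \<in> cell s t A B m"
  have "0 \<le> x $ m \<and> x $ m \<le> 1 \<and> (x $ m \<le> s \<longleftrightarrow> m \<in> A) \<and> (x $ m \<le> t \<longleftrightarrow> m \<in> B)" for m
    using x[rule_format, of m] assms by (auto simp: cell_def split: if_splits)
  then show "x \<in> unit_cube \<and> {m. x $ m \<le> s} = A \<and> {m. x $ m \<le> t} = B"
    by (auto simp: unit_cube_def)
next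
  assume "x \<in> unit_cube \<and> {m. x $ m \<le> s} = A \<and> {m. x $ m \<le> t} = B"
  then show "\<forall>m. x $ m \<in> cell s t A B m" by (auto simp: cell_def unit_cube_def)
qed

lemma indicator_count_event:
  fixes x :: "real^'n"
  assumes "0 \<le> s" "s \<le> t" "t \<le> 1"
  shows "(indicator {x. x \<in> unit_cube \<and> count_le x s < i \<and> count_le x t < j} x :: ennreal) =
    (\<Sum>B\<in>Pow UNIV. \<Sum>A\<in>Pow B. if card A < i \<and> card B < j
        then \<Prod>m\<in>UNIV. indicator (cell s t A B m) (x $ m) else 0)"
proof -
  define A0 where "A0 = {m. x $ m \<le> s}"
  define B0 where "B0 = {m. x $ m \<le> t}"
  have "A0 \<subseteq> B0" using assms by (auto simp: A0_def B0_def)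
  define v :: ennreal where "v = (if card A0 < i \<and> card B0 < j \<and> x \<in> unit_cube then 1 else 0)"
  have "(\<Sum>B\<in>Pow UNIV. \<Sum>A\<in>Pow B. if card A < i \<and> card B < j
        then \<Prod>m\<in>UNIV. indicator (cell s t A B m) (x $ m) else 0)
    = (\<Sum>B\<in>Pow UNIV. \<Sum>A\<in>Pow B. if A = A0 \<and> B = B0 then v else 0)"
    by (intro sum.cong refl)
       (auto simp: prod_indicator_eq mem_cell_iff assms A0_def B0_def v_def)
  also have "\<dots> = (\<Sum>B\<in>Pow UNIV. if B = B0 then v else 0)"
    using \<open>A0 \<subseteq> B0\<close> by (intro sum.cong refl) simp
  also have "\<dots> = indicator {x. x \<in> unit_cube \<and> count_le x s < i \<and> count_le x t < j} x"
    by (auto simp: v_def A0_def B0_def count_le_def indicator_def)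
  finally show ?thesis ..
qed

lemma nn_integral_prod_indicator:
  fixes I :: "'n::finite \<Rightarrow> real set"
  assumes "\<And>m. I m \<in> sets borel"
  shows "(\<integral>\<^sup>+x. (\<Prod>m\<in>UNIV. indicator (I m) (x $ m)) \<partial>(lborel :: (real^'n) measure))
         = (\<Prod>m\<in>UNIV. emeasure lborel (I m))"
proof -
  have axis: "bij_betw (\<lambda>i::'n. axis i (1::real)) UNIV Basis"
    by (auto simp: bij_betw_def inj_on_def Basis_vec_def axis_eq_axis)
  have "(\<integral>\<^sup>+x. (\<Prod>b\<in>Basis. indicator (I (axis_index b)) (x \<bullet> b)) \<partial>(lborel :: (real^'n) measure))
     = (\<Prod>b\<in>(Basis :: (real^'n) set). integral\<^sup>N lborel (indicator (I (axis_index b))))"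
    by (rule nn_integral_lborel_prod) (use assms in auto)
  then show ?thesis
    using assms by (simp add: prod.reindex_bij_betw[OF axis, symmetric] inner_axis axis_eq_axis)
qed

lemma prod_cell_lengths:
  fixes A B :: "'n::finite set"
  assumes "A \<subseteq> B"
  shows "(\<Prod>m\<in>UNIV. if m \<in> A then s else if m \<in> B then t - s else 1 - t) =
     s ^ card A * (t - s) ^ (card B - card A) * ((1::real) - t) ^ (CARD('n) - card B)"
proof -
  have "(\<Prod>m\<in>UNIV. if m \<in> A then s else if m \<in> B then t - s else 1 - t) =
      (\<Prod>m\<in>A. s) * ((\<Prod>m\<in>B - A. t - s) * (\<Prod>m\<in>-B. 1 - t))"
  proof -
    have "-A \<inter> B = B - A" "-A \<inter> -B = -B" using assms by auto
    then show ?thesis by (simp add: prod.If_cases)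
  qed
  then show ?thesis
    using assms by (simp add: card_Diff_subset Compl_eq_Diff_UNIV)
qed

lemma nn_integral_cell:
  fixes A B :: "'n::finite set"
  assumes "A \<subseteq> B" "0 \<le> s" "s \<le> t" "t \<le> 1"
  shows "(\<integral>\<^sup>+x. (\<Prod>m\<in>UNIV. indicator (cell s t A B m) (x $ m)) \<partial>(lborel :: (real^'n) measure))
    = ennreal (s ^ card A * (t - s) ^ (card B - card A) * (1 - t) ^ (CARD('n) - card B))"
proof -
  have "(\<integral>\<^sup>+x. (\<Prod>m\<in>UNIV. indicator (cell s t A B m) (x $ m)) \<partial>(lborel :: (real^'n) measure))
     = (\<Prod>m\<in>UNIV. emeasure lborel (cell s t A B m))"
    by (rule nn_integral_prod_indicator) (auto simp: cell_def)
  also have "\<dots> = (\<Prod>m\<in>UNIV. ennreal (if m \<in> A then s else if m \<in> B then t - s else 1 - t))"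
    using assms by (intro prod.cong refl) (auto simp: cell_def)
  also have "\<dots> = ennreal (\<Prod>m\<in>UNIV. if m \<in> A then s else if m \<in> B then t - s else 1 - t)"
    using assms by (intro prod_ennreal) auto
  finally show ?thesis
    by (simp add: prod_cell_lengths[OF assms(1)])
qed

lemma sum_Pow_card:
  assumes "finite S"
  shows "(\<Sum>A\<in>Pow S. g (card A)) = (\<Sum>k\<le>card S. of_nat (card S choose k) * (g k :: 'a::comm_semiring_1))"
proof -
  have "(\<Sum>A\<in>Pow S. g (card A)) = (\<Sum>k\<le>card S. \<Sum>A\<in>{A\<in>Pow S. card A = k}. g (card A))"
    by (rule sum.group[symmetric]) (use assms in \<open>auto intro: card_mono\<close>)
  also have "\<dots> = (\<Sum>k\<le>card S. of_nat (card S choose k) * g k)"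
  proof (intro sum.cong refl)
    fix k
    have "{A\<in>Pow S. card A = k} = {A. A \<subseteq> S \<and> card A = k}" by auto
    then show "(\<Sum>A\<in>{A\<in>Pow S. card A = k}. g (card A)) = of_nat (card S choose k) * g k"
      using n_subsets[OF assms] by simp
  qed
  finally show ?thesis .
qed

lemma sum_cells_eq_count_prob:
  "(\<Sum>B\<in>Pow (UNIV :: 'n::finite set). \<Sum>A\<in>Pow B. if card A < i \<and> card B < j
      then s ^ card A * (t - s) ^ (card B - card A) * (1 - t) ^ (CARD('n) - card B) else 0)
   = count_prob CARD('n) i j s t"
proof -
  let ?term = "\<lambda>b a. if a < i \<and> b < j then s ^ a * (t - s) ^ (b - a) * (1 - t) ^ (CARD('n) - b) else 0"
  have "(\<Sum>B\<in>Pow (UNIV :: 'n set). \<Sum>A\<in>Pow B. ?term (card B) (card A))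
      = (\<Sum>B\<in>Pow (UNIV :: 'n set). \<Sum>a\<le>card B. real (card B choose a) * ?term (card B) a)"
    by (intro sum.cong refl sum_Pow_card) auto
  also have "\<dots> = (\<Sum>b\<le>CARD('n). real (CARD('n) choose b) * (\<Sum>a\<le>b. real (b choose a) * ?term b a))"
    using sum_Pow_card[of "UNIV :: 'n set" "\<lambda>b. \<Sum>a\<le>b. real (b choose a) * ?term b a"] by simp
  also have "\<dots> = count_prob CARD('n) i j s t"
    unfolding count_prob_def by (intro sum.cong refl) (auto simp: sum_distrib_left intro!: sum.cong)
  finally show ?thesis .
qed

lemma count_event_measure:
  assumes "0 \<le> s" "s \<le> t" "t \<le> 1"
  shows "(\<integral>\<^sup>+x. indicator {x :: real^'n. x \<in> unit_cube \<and> count_le x s < i \<and> count_le x t < j} x \<partial>lborel)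
     = ennreal (count_prob CARD('n) i j s t)"
proof -
  let ?len = "\<lambda>A B :: 'n set. s ^ card A * (t - s) ^ (card B - card A) * (1 - t) ^ (CARD('n) - card B)"
  have meas: "(\<lambda>x :: real^'n. \<Prod>m\<in>UNIV. indicator (cell s t A B m) (x $ m) :: ennreal) \<in> borel_measurable lborel"
    for A B :: "'n set"
    by (intro borel_measurable_prod_ennreal) (auto simp: cell_def)
  have "(\<integral>\<^sup>+x. indicator {x :: real^'n. x \<in> unit_cube \<and> count_le x s < i \<and> count_le x t < j} x \<partial>lborel)
    = (\<Sum>B\<in>Pow UNIV. \<Sum>A\<in>Pow B. if card A < i \<and> card B < j
        then \<integral>\<^sup>+x. (\<Prod>m\<in>UNIV. indicator (cell s t A B m) ((x :: real^'n) $ m)) \<partial>lborel else 0)"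
    using meas by (simp add: indicator_count_event[OF assms] nn_integral_sum)
       (intro sum.cong refl; auto)
  also have "\<dots> = (\<Sum>B\<in>Pow (UNIV :: 'n set). \<Sum>A\<in>Pow B.
      ennreal (if card A < i \<and> card B < j then ?len A B else 0))"
    using assms by (intro sum.cong refl) (auto simp: nn_integral_cell)
  also have "\<dots> = ennreal (\<Sum>B\<in>Pow (UNIV :: 'n set). \<Sum>A\<in>Pow B. if card A < i \<and> card B < j then ?len A B else 0)"
    using assms by (simp add: sum_nonneg)
  finally show ?thesis by (simp only: sum_cells_eq_count_prob)
qed

section \<open>Integrating the joint law over the square\<close>

lemma beta_constant_Suc:
  fixes d :: real
  shows "d * (d ^ (p + q + 1) * fact p * fact q / fact (p + q + 1))
      - d ^ (Suc p + q + 1) * fact (Suc p) * fact q / fact (Suc p + q + 1)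
    = d ^ (p + Suc q + 1) * fact p * fact (Suc q) / fact (p + Suc q + 1)"
proof -
  have facts: "fact (Suc p + q + 1) = real (p + q + 2) * fact (p + q + 1)"
    "fact (p + Suc q + 1) = real (p + q + 2) * fact (p + q + 1)"
    "fact (Suc p) = real (Suc p) * fact p" "fact (Suc q) = real (Suc q) * fact q"
    "d ^ (Suc p + q + 1) = d * d ^ (p + q + 1)" "d ^ (p + Suc q + 1) = d * d ^ (p + q + 1)"
    by (simp_all add: algebra_simps)
  have "X * (Y * a * b / F) - X * Y * (real (Suc p) * a) * b / (real (p + q + 2) * F)
      = X * Y * a * (real (Suc q) * b) / (real (p + q + 2) * F)" if "F > 0" for X Y a b F :: real
  proof -
    have "real (p + q + 2) * F \<noteq> 0" "F \<noteq> 0" using that by simp_all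
    moreover have "X * (Y * a * b / F) = X * Y * a * b * real (p + q + 2) / (real (p + q + 2) * F)"
      using calculation by (simp add: field_simps)
    ultimately show ?thesis by (simp add: diff_divide_distrib[symmetric] algebra_simps)
  qed
  then show ?thesis unfolding facts by simp
qed

lemma beta_has_integral:
  fixes l u :: real
  assumes "l \<le> u"
  shows "((\<lambda>t. (t - l) ^ p * (u - t) ^ q) has_integral
           ((u - l) ^ (p + q + 1) * fact p * fact q / fact (p + q + 1))) {l..u}"
proof (induction q arbitrary: p)
  case 0
  have "((\<lambda>t. (t - l) ^ p) has_integral ((u - l) ^ (p + 1) / (p + 1) - (l - l) ^ (p + 1) / (p + 1))) {l..u}"
  proof (rule fundamental_theorem_of_calculus[OF assms])
    fix x assume "x \<in> {l..u}"
    have "((\<lambda>t. (t - l) ^ Suc p / real (Suc p)) has_real_derivative (x - l) ^ p) (at x within {l..u})"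
      by (rule derivative_eq_intros refl | simp)+
    then show "((\<lambda>t. (t - l) ^ (p + 1) / (p + 1)) has_vector_derivative (x - l) ^ p) (at x within {l..u})"
      by (simp add: has_real_derivative_iff_has_vector_derivative)
  qed
  moreover have "(fact (p + 1) :: real) = (real p + 1) * fact p" by simp
  ultimately show ?case by (simp add: divide_simps)
next
  case (Suc q)
  \<comment> \<open>\<open>u - t = (u - l) - (t - l)\<close> trades a factor \<open>u - t\<close> for a factor \<open>t - l\<close>\<close>
  have split: "(\<lambda>t. (t - l) ^ p * (u - t) ^ Suc q) = (\<lambda>t. (u - l) * ((t - l) ^ p * (u - t) ^ q) - (t - l) ^ Suc p * (u - t) ^ q)"
    by (auto simp: field_simps)
  have "((\<lambda>t. (u - l) * ((t - l) ^ p * (u - t) ^ q) - (t - l) ^ Suc p * (u - t) ^ q) has_integral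
     ((u - l) * ((u - l) ^ (p + q + 1) * fact p * fact q / fact (p + q + 1)) -
      (u - l) ^ (Suc p + q + 1) * fact (Suc p) * fact q / fact (Suc p + q + 1))) {l..u}"
    by (intro has_integral_diff has_integral_mult_right Suc)
  moreover note beta_constant_Suc[of "u - l" p q]
  ultimately show ?case unfolding split by simp
qed

definition pair_count :: "nat \<Rightarrow> nat \<Rightarrow> nat \<Rightarrow> real" where
  "pair_count n i j = (\<Sum>b\<le>n. \<Sum>a\<le>b. if a < i \<and> b < j then 1 else 0)"

lemma pair_count_nonneg: "0 \<le> pair_count n i j"
  unfolding pair_count_def by (intro sum_nonneg) auto

lemma pair_count_eq_sum_min:
  assumes "j \<le> n + 1"
  shows "pair_count n i j = (\<Sum>b<j. real (min (b + 1) i))"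
proof -
  have "(\<Sum>a\<le>b. if a < i then (1::real) else 0) = real (min (b + 1) i)" for b
  proof -
    have "{a. a \<le> b \<and> a < i} = {..<min (b + 1) i}" by auto
    then show ?thesis by (simp add: sum.If_cases Int_def atMost_def)
  qed
  then have "pair_count n i j = (\<Sum>b\<le>n. if b < j then real (min (b + 1) i) else 0)"
    unfolding pair_count_def by (intro sum.cong refl) auto
  also have "\<dots> = (\<Sum>b\<in>{..n} \<inter> {b. b < j}. real (min (b + 1) i))"
    by (simp add: sum.If_cases)
  also have "{..n} \<inter> {b. b < j} = {..<j}" using assms by auto
  finally show ?thesis .
qed

lemma sum_min_Suc:
  "2 * (\<Sum>b<j. real (min (b + 1) i)) =
     (if j \<le> i then real j * (real j + 1) else 2 * real i * real j + real i - real i * real i)"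
proof (induction j)
  case (Suc j)
  then show ?case by (cases "j < i"; cases "j = i") (auto simp: algebra_simps min_def)
qed simp

lemma pair_count_sym:
  assumes "i \<le> n + 1" "j \<le> n + 1"
  shows "pair_count n i j + pair_count n j i = real (min i j * (max i j + 1))"
proof -
  have "2 * pair_count n i j + 2 * pair_count n j i = 2 * real (min i j * (max i j + 1))"
    using sum_min_Suc[of j i] sum_min_Suc[of i j]
    unfolding pair_count_eq_sum_min[OF assms(2)] pair_count_eq_sum_min[OF assms(1)]
    by (cases "i \<le> j") (auto simp: min_def max_def algebra_simps)
  then show ?thesis by simp
qed

lemma multinomial_fact:
  assumes "a \<le> b" "b \<le> n"
  shows "real (n choose b) * real (b choose a) * fact a * fact (b - a) * fact (n - b) = fact n"
proof -
  have "real (n choose b) * real (b choose a) * fact a * fact (b - a) * fact (n - b)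
      = real (fact a * fact (b - a) * (b choose a) * fact (n - b) * (n choose b))"
    by (simp add: algebra_simps)
  also have "\<dots> = fact n"
    using binomial_fact_lemma[OF assms(1)] binomial_fact_lemma[OF assms(2)] by simp
  finally show ?thesis .
qed

definition count_prob_tail :: "nat \<Rightarrow> nat \<Rightarrow> nat \<Rightarrow> real \<Rightarrow> real" where
  "count_prob_tail n i j s = (\<Sum>b\<le>n. \<Sum>a\<le>b. if a < i \<and> b < j then
     real (n choose b) * real (b choose a) * s ^ a *
       ((1 - s) ^ (b - a + (n - b) + 1) * fact (b - a) * fact (n - b) / fact (b - a + (n - b) + 1)) else 0)"

lemma count_prob_tail_nonneg: "0 \<le> s \<Longrightarrow> s \<le> 1 \<Longrightarrow> 0 \<le> count_prob_tail n i j s"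
  unfolding count_prob_tail_def by (intro sum_nonneg) auto

lemma has_integral_count_prob:
  assumes "s \<le> 1"
  shows "(count_prob n i j s has_integral count_prob_tail n i j s) {s..1}"
  unfolding count_prob_def count_prob_tail_def
proof (intro has_integral_sum finite_atMost)
  fix b a
  show "((\<lambda>t. if a < i \<and> b < j then real (n choose b) * real (b choose a) *
             (s ^ a * (t - s) ^ (b - a) * (1 - t) ^ (n - b)) else 0) has_integral
        (if a < i \<and> b < j then real (n choose b) * real (b choose a) * s ^ a *
             ((1 - s) ^ (b - a + (n - b) + 1) * fact (b - a) * fact (n - b) / fact (b - a + (n - b) + 1))
         else 0)) {s..1}"
  proof (cases "a < i \<and> b < j")
    case True
    have "((\<lambda>t. (real (n choose b) * real (b choose a) * s ^ a) * ((t - s) ^ (b - a) * (1 - t) ^ (n - b)))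
    has_integral (real (n choose b) * real (b choose a) * s ^ a) *
      ((1 - s) ^ (b - a + (n - b) + 1) * fact (b - a) * fact (n - b) / fact (b - a + (n - b) + 1))) {s..1}"
      by (intro has_integral_mult_right beta_has_integral assms)
    then show ?thesis using True by (simp add: mult_ac)
  next
    case False
    show ?thesis unfolding if_not_P[OF False] by simp
  qed
qed

text \<open>Each admissible pair of counts \<open>(a, b)\<close> contributes the same amount \<open>n! / (n + 2)!\<close>: the
  multinomial coefficient cancels the Dirichlet integral.\<close>

lemma has_integral_count_prob_tail:
  "(count_prob_tail n i j has_integral (pair_count n i j * (fact n / fact (n + 2)))) {0..1}"
proof -
  have "(count_prob_tail n i j has_integral
      (\<Sum>b\<le>n. \<Sum>a\<le>b. if a < i \<and> b < j then fact n / fact (n + 2) else 0)) {0..1}"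
    unfolding count_prob_tail_def
  proof (intro has_integral_sum finite_atMost)
    fix b a assume ab: "b \<in> {..n}" "a \<in> {..b}"
    show "((\<lambda>s. if a < i \<and> b < j then real (n choose b) * real (b choose a) * s ^ a *
         ((1 - s) ^ (b - a + (n - b) + 1) * fact (b - a) * fact (n - b) / fact (b - a + (n - b) + 1))
       else 0) has_integral (if a < i \<and> b < j then fact n / fact (n + 2) else 0)) {0..1}"
    proof (cases "a < i \<and> b < j")
    case True
    define Q where "Q = b - a + (n - b) + 1"
    define C where "C = real (n choose b) * real (b choose a) * fact (b - a) * fact (n - b) / fact Q"
    have "a + Q + 1 = n + 2" using ab by (auto simp: Q_def)
    then have "C * ((1 - 0) ^ (a + Q + 1) * fact a * fact Q / fact (a + Q + 1)) = fact n / fact (n + 2)"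
      using multinomial_fact[of a b n] ab by (simp add: C_def field_simps)
    moreover have "((\<lambda>s. C * ((s - 0) ^ a * (1 - s) ^ Q)) has_integral
        C * ((1 - 0) ^ (a + Q + 1) * fact a * fact Q / fact (a + Q + 1))) {0..1}"
      by (intro has_integral_mult_right beta_has_integral) simp
    ultimately show ?thesis using True by (simp add: C_def Q_def mult_ac)
    next
      case False
      show ?thesis unfolding if_not_P[OF False] by simp
    qed
  qed
  moreover have "(\<Sum>b\<le>n. \<Sum>a\<le>b. if a < i \<and> b < j then fact n / fact (n + 2) else 0)
      = pair_count n i j * (fact n / fact (n + 2) :: real)"
    unfolding pair_count_def sum_distrib_right by (intro sum.cong refl) simp
  ultimately show ?thesis by simp
qed

lemma nn_integral_has_integral_between:
  fixes f :: "real \<Rightarrow> real"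
  assumes "(f has_integral I) {l..u}" "\<And>t. t \<in> {l..u} \<Longrightarrow> 0 \<le> f t" "{l<..<u} \<subseteq> S" "S \<subseteq> {l..u}"
  shows "(\<integral>\<^sup>+t. ennreal (indicator S t * f t) \<partial>lborel) = ennreal I"
proof -
  have "AE t in lborel. t \<noteq> l" "AE t in lborel. t \<noteq> u" by (rule AE_lborel_singleton)+
  then have "AE t in lborel. ennreal (indicator S t * f t) = ennreal (indicator {l..u} t * f t)"
  proof eventually_elim
    case (elim t)
    then have "t \<in> S \<longleftrightarrow> t \<in> {l..u}" using assms(3,4) by auto
    then show ?case by (simp add: indicator_def)
  qed
  then have "(\<integral>\<^sup>+t. ennreal (indicator S t * f t) \<partial>lborel) = (\<integral>\<^sup>+t. ennreal (indicator {l..u} t * f t) \<partial>lborel)"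
    by (rule nn_integral_cong_AE)
  also have "\<dots> = ennreal I" by (rule nn_integral_has_integral_lebesgue[OF assms(2,1)])
  finally show ?thesis .
qed

lemma count_prob_triangle:
  assumes "\<And>s. {s<..<1} \<subseteq> T s" "\<And>s. T s \<subseteq> {s..1}"
  shows "(\<integral>\<^sup>+s. \<integral>\<^sup>+t. indicator {0..<1} s * indicator (T s) t * ennreal (count_prob n i j s t) \<partial>lborel \<partial>lborel)
    = ennreal (pair_count n i j * (fact n / fact (n + 2)))"
proof -
  have inner: "(\<integral>\<^sup>+t. indicator {0..<1} s * indicator (T s) t * ennreal (count_prob n i j s t) \<partial>lborel)
      = ennreal (indicator {0..<1} s * count_prob_tail n i j s)" for s
  proof (cases "s \<in> {0..<1}")
    case True
    then have "(\<integral>\<^sup>+t. ennreal (indicator (T s) t * count_prob n i j s t) \<partial>lborel) = count_prob_tail n i j s"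
      using assms by (intro nn_integral_has_integral_between[OF has_integral_count_prob] count_prob_nonneg) auto
    then show ?thesis using True by (simp add: indicator_mult_ennreal mult.commute)
  qed simp
  have "(\<integral>\<^sup>+s. ennreal (indicator {0..<1} s * count_prob_tail n i j s) \<partial>lborel)
      = ennreal (pair_count n i j * (fact n / fact (n + 2)))"
    by (rule nn_integral_has_integral_between[OF has_integral_count_prob_tail])
       (auto intro: count_prob_tail_nonneg)
  then show ?thesis by (simp add: inner)
qed

lemma count_prob_square:
  "(\<integral>\<^sup>+s. \<integral>\<^sup>+t. indicator {0..<1} s * indicator {0..<1} t *
      ennreal (if s \<le> t then count_prob n i j s t else count_prob n j i t s) \<partial>lborel \<partial>lborel)
   = ennreal ((pair_count n i j + pair_count n j i) * (fact n / fact (n + 2)))"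
proof -
  let ?L = "\<lambda>s t. indicator {0..<1} s * indicator {s..<1} t * ennreal (count_prob n i j s t)"
  let ?R = "\<lambda>s t. indicator {0..<1} t * indicator {t<..<1} s * ennreal (count_prob n j i t s)"
  have split: "indicator {0..<1} s * indicator {0..<1} t *
      ennreal (if s \<le> t then count_prob n i j s t else count_prob n j i t s) = ?L s t + ?R s t"
    for s t :: real
    by (auto simp: indicator_def)
  have "(\<integral>\<^sup>+s. \<integral>\<^sup>+t. indicator {0..<1} s * indicator {0..<1} t *
      ennreal (if s \<le> t then count_prob n i j s t else count_prob n j i t s) \<partial>lborel \<partial>lborel)
    = (\<integral>\<^sup>+s. (\<integral>\<^sup>+t. ?L s t \<partial>lborel) + (\<integral>\<^sup>+t. ?R s t \<partial>lborel) \<partial>lborel)"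
    unfolding split
    by (intro nn_integral_cong nn_integral_add)
       (unfold indicator_def greaterThanLessThan_iff atLeastLessThan_iff, measurable)
  also have "\<dots> = (\<integral>\<^sup>+s. \<integral>\<^sup>+t. ?L s t \<partial>lborel \<partial>lborel) + (\<integral>\<^sup>+s. \<integral>\<^sup>+t. ?R s t \<partial>lborel \<partial>lborel)"
    by (rule nn_integral_add) (unfold indicator_def greaterThanLessThan_iff atLeastLessThan_iff, measurable)
  also have "(\<integral>\<^sup>+s. \<integral>\<^sup>+t. ?R s t \<partial>lborel \<partial>lborel) = (\<integral>\<^sup>+t. \<integral>\<^sup>+s. ?R s t \<partial>lborel \<partial>lborel)"
    by (rule lborel_pair.Fubini')
       (unfold indicator_def greaterThanLessThan_iff atLeastLessThan_iff, measurable)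
  also have "\<dots> = ennreal (pair_count n j i * (fact n / fact (n + 2)))"
    by (rule count_prob_triangle) auto
  also have "(\<integral>\<^sup>+s. \<integral>\<^sup>+t. ?L s t \<partial>lborel \<partial>lborel) = ennreal (pair_count n i j * (fact n / fact (n + 2)))"
    by (rule count_prob_triangle) auto
  moreover have "0 \<le> pair_count n i j * (fact n / fact (n + 2))" "0 \<le> pair_count n j i * (fact n / fact (n + 2))"
    by (simp_all add: pair_count_nonneg)
  ultimately show ?thesis
    by (simp only: distrib_right ennreal_plus)
qed

section \<open>The Gram matrix of the order statistics\<close>

lemma unit_cube_eq_cbox: "unit_cube = cbox (0 :: real^'n) 1"
  by (auto simp: unit_cube_def mem_box_cart)

lemma sets_unit_cube [measurable]: "(unit_cube :: (real^'n) set) \<in> sets borel"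
  unfolding unit_cube_eq_cbox by simp

lemma nn_integral_os_threshold_event:
  assumes "i \<le> CARD('n) + 1" "j \<le> CARD('n) + 1"
  shows "(\<integral>\<^sup>+x. indicator {x :: real^'n. x \<in> unit_cube \<and> 0 \<le> s \<and> s < os i x \<and> 0 \<le> t \<and> t < os j x} x \<partial>lborel)
    = indicator ({0..<1} \<times> {0..<1}) (s, t) *
        ennreal (if s \<le> t then count_prob CARD('n) i j s t else count_prob CARD('n) j i t s)"
proof (cases "0 \<le> s \<and> s < 1 \<and> 0 \<le> t \<and> t < 1")
  case True
  then have event: "{x :: real^'n. x \<in> unit_cube \<and> 0 \<le> s \<and> s < os i x \<and> 0 \<le> t \<and> t < os j x}
      = {x. x \<in> unit_cube \<and> count_le x s < i \<and> count_le x t < j}"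
    using assms less_os_iff_count_le by blast
  show ?thesis
  proof (cases "s \<le> t")
    case True
    then show ?thesis
      unfolding event using count_event_measure[where 'n='n, of s t i j] \<open>0 \<le> s \<and> s < 1 \<and> 0 \<le> t \<and> t < 1\<close>
      by simp
  next
    case False
    have "{x :: real^'n. x \<in> unit_cube \<and> count_le x s < i \<and> count_le x t < j}
        = {x. x \<in> unit_cube \<and> count_le x t < j \<and> count_le x s < i}" by auto
    then show ?thesis
      unfolding event using False count_event_measure[where 'n='n, of t s j i] \<open>0 \<le> s \<and> s < 1 \<and> 0 \<le> t \<and> t < 1\<close>
      by simp
  qed
next
  case False
  then have "{x :: real^'n. x \<in> unit_cube \<and> 0 \<le> s \<and> s < os i x \<and> 0 \<le> t \<and> t < os j x} = {}"
    using os_bounds(2)[of _ i] os_bounds(2)[of _ j] by fastforce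
  then show ?thesis using False by simp
qed

lemma ennreal_mult_eq_nn_integral_rectangle:
  assumes "0 \<le> a" "0 \<le> b"
  shows "ennreal (a * b) = (\<integral>\<^sup>+p. indicator ({0..<a} \<times> {0..<b}) p \<partial>(lborel \<Otimes>\<^sub>M lborel))"
  using assms by (simp add: lborel.emeasure_pair_measure_Times ennreal_mult)

lemma nn_integral_os_mult:
  assumes "i \<le> CARD('n) + 1" "j \<le> CARD('n) + 1"
  shows "(\<integral>\<^sup>+x. indicator unit_cube x * ennreal (os i x * os j x) \<partial>(lborel :: (real^'n) measure))
    = (\<integral>\<^sup>+s. \<integral>\<^sup>+t. indicator {0..<1} s * indicator {0..<1} t *
         ennreal (if s \<le> t then count_prob CARD('n) i j s t else count_prob CARD('n) j i t s) \<partial>lborel \<partial>lborel)"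
proof -
  let ?G = "\<lambda>p :: real \<times> real. indicator ({0..<1} \<times> {0..<1}) p * ennreal (if fst p \<le> snd p
      then count_prob CARD('n) i j (fst p) (snd p) else count_prob CARD('n) j i (snd p) (fst p))"
  define F :: "real^'n \<Rightarrow> real \<times> real \<Rightarrow> ennreal" where
    "F x p = (if x \<in> unit_cube \<and> 0 \<le> fst p \<and> fst p < os i x \<and> 0 \<le> snd p \<and> snd p < os j x then 1 else 0)"
    for x p
  have F_measurable: "(\<lambda>(x, p). F x p) \<in> borel_measurable (lborel \<Otimes>\<^sub>M (lborel \<Otimes>\<^sub>M lborel))"
    unfolding F_def by measurable
  have "indicator unit_cube x * ennreal (os i x * os j x) = (\<integral>\<^sup>+p. F x p \<partial>(lborel \<Otimes>\<^sub>M lborel))" for x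
  proof (cases "x \<in> unit_cube")
    case True
    then have "F x = indicator ({0..<os i x} \<times> {0..<os j x})"
      by (auto simp: F_def indicator_def fun_eq_iff)
    then show ?thesis
      using True os_bounds[OF True] by (simp add: ennreal_mult_eq_nn_integral_rectangle)
  qed (simp add: F_def)
  then have "(\<integral>\<^sup>+x. indicator unit_cube x * ennreal (os i x * os j x) \<partial>(lborel :: (real^'n) measure))
     = (\<integral>\<^sup>+x. \<integral>\<^sup>+p. F x p \<partial>(lborel \<Otimes>\<^sub>M lborel) \<partial>lborel)"
    by simp
  also have "\<dots> = (\<integral>\<^sup>+p. \<integral>\<^sup>+x. F x p \<partial>lborel \<partial>(lborel \<Otimes>\<^sub>M lborel))"
    by (rule pair_sigma_finite.Fubini'[symmetric, OF _ F_measurable])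
       (intro pair_sigma_finite.intro sigma_finite_lborel lborel_pair.P.sigma_finite_measure_axioms)
  also have "\<dots> = (\<integral>\<^sup>+p. ?G p \<partial>(lborel \<Otimes>\<^sub>M lborel))"
  proof (intro nn_integral_cong)
    fix p :: "real \<times> real"
    have "F x p = indicator {x. x \<in> unit_cube \<and> 0 \<le> fst p \<and> fst p < os i x \<and> 0 \<le> snd p \<and> snd p < os j x} x"
      for x by (simp add: F_def indicator_def)
    then show "(\<integral>\<^sup>+x. F x p \<partial>lborel) = ?G p"
      using nn_integral_os_threshold_event[OF assms, of "fst p" "snd p"] by simp
  qed
  also have "\<dots> = (\<integral>\<^sup>+s. \<integral>\<^sup>+t. ?G (s, t) \<partial>lborel \<partial>lborel)"
    by (rule lborel.nn_integral_fst[symmetric]) measurable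
  finally show ?thesis
    by (simp only: indicator_times fst_conv snd_conv)
qed

lemma os_measurable [measurable]: "os k \<in> borel_measurable (lebesgue_on (unit_cube :: (real^'n) set))"
  by (intro measurable_restrict_space1 measurable_completion) simp

lemma L2_inner_os_os:
  assumes "i \<le> CARD('n) + 1" "j \<le> CARD('n) + 1"
  shows "L2_inner (os i :: real^'n \<Rightarrow> real) (os j) =
     real (min i j * (max i j + 1)) / ((real CARD('n) + 1) * (real CARD('n) + 2))"
proof -
  let ?N = "CARD('n)"
  have "L2_inner (os i :: real^'n \<Rightarrow> real) (os j)
      = enn2real (\<integral>\<^sup>+x. ennreal (os i x * os j x) \<partial>lebesgue_on (unit_cube :: (real^'n) set))"
    unfolding L2_inner_def
    by (rule integral_eq_nn_integral) (auto simp: os_bounds space_restrict_space)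
  also have "(\<integral>\<^sup>+x. ennreal (os i x * os j x) \<partial>lebesgue_on (unit_cube :: (real^'n) set)) =
     (\<integral>\<^sup>+x. indicator unit_cube x * ennreal (os i x * os j x) \<partial>(lborel :: (real^'n) measure))"
    by (subst nn_integral_restrict_space)
       (auto simp: nn_integral_completion mult.commute)
  also have "\<dots> = ennreal ((pair_count ?N i j + pair_count ?N j i) * (fact ?N / fact (?N + 2)))"
    using nn_integral_os_mult[OF assms] count_prob_square by simp
  also have "(pair_count ?N i j + pair_count ?N j i) * (fact ?N / fact (?N + 2))
      = real (min i j * (max i j + 1)) / ((real ?N + 1) * (real ?N + 2))"
  proof -
    have "(fact (?N + 2) :: real) = ((real ?N + 1) * (real ?N + 2)) * fact ?N"
      by (simp add: algebra_simps)
    then show ?thesis using pair_count_sym[OF assms] by simp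
  qed
  finally show ?thesis by simp
qed

section \<open>The dual basis\<close>

definition gram_num :: "nat \<Rightarrow> nat \<Rightarrow> real" where
  "gram_num j k = real (min j k * (max j k + 1))"

lemma gram_num_second_difference:
  "1 \<le> k \<Longrightarrow> 1 \<le> m \<Longrightarrow> gram_num (m - 1) k - 2 * gram_num m k + gram_num (m + 1) k = - (if m = k then 1 else 0)"
  unfolding gram_num_def by (cases "m + 1 \<le> k"; cases "m = k") (auto simp: min_def max_def algebra_simps)

lemma sum_second_difference_by_parts:
  fixes u v :: "nat \<Rightarrow> real"
  assumes "u 0 = 0" "v 0 = 0"
  shows "(\<Sum>j=1..n. (u (j + 1) - 2 * u j + u (j - 1)) * v j)
    = (\<Sum>j=1..n. u j * (v (j - 1) - 2 * v j + v (j + 1))) + u (n + 1) * v n - u n * v (n + 1)"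
  by (induction n) (auto simp: algebra_simps assms)

definition dual_os :: "nat \<Rightarrow> real^'n \<Rightarrow> real" where
  "dual_os j = (if j \<le> CARD('n) then g_fun j
     else (\<lambda>x. (real CARD('n) + 1)\<^sup>2 - (real CARD('n) + 1) * (real CARD('n) + 2) * os CARD('n) x))"

lemma sum_second_difference_gram_num:
  fixes u :: "nat \<Rightarrow> real"
  assumes "u 0 = 0" "1 \<le> k"
  shows "(\<Sum>j=1..n. (u (j + 1) - 2 * u j + u (j - 1)) * gram_num j k)
    = u (n + 1) * gram_num n k - u n * gram_num (n + 1) k - (if k \<le> n then u k else 0)"
proof -
  have "(\<Sum>j=1..n. (u (j + 1) - 2 * u j + u (j - 1)) * gram_num j k)
      = (\<Sum>j=1..n. u j * (gram_num (j - 1) k - 2 * gram_num j k + gram_num (j + 1) k))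
        + u (n + 1) * gram_num n k - u n * gram_num (n + 1) k"
    by (rule sum_second_difference_by_parts) (simp_all add: assms gram_num_def)
  also have "(\<Sum>j=1..n. u j * (gram_num (j - 1) k - 2 * gram_num j k + gram_num (j + 1) k))
      = (\<Sum>j=1..n. - (if j = k then u k else 0))"
  proof (intro sum.cong refl)
    fix j assume "j \<in> {1..n}"
    then show "u j * (gram_num (j - 1) k - 2 * gram_num j k + gram_num (j + 1) k) = - (if j = k then u k else 0)"
      using gram_num_second_difference[of k j] assms by simp
  qed
  also have "\<dots> = - (if k \<le> n then u k else 0)"
    using assms by (simp add: sum_negf)
  finally show ?thesis by simp
qed

lemma sum_gram_num_dual_os:
  fixes x :: "real^'n"
  assumes "1 \<le> k" "k \<le> CARD('n) + 1"
  shows "(\<Sum>j=1..CARD('n) + 1. gram_num j k * dual_os j x) = (real CARD('n) + 1) * (real CARD('n) + 2) * os k x"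
proof -
  let ?N = "CARD('n)"
  let ?c = "(real ?N + 1) * (real ?N + 2)"
  define u where "u m = os m x" for m
  have "(\<Sum>j=1..?N + 1. gram_num j k * dual_os j x)
      = - ?c * (\<Sum>j=1..?N. (u (j + 1) - 2 * u j + u (j - 1)) * gram_num j k)
        + gram_num (?N + 1) k * ((real ?N + 1)\<^sup>2 - ?c * u ?N)"
    by (simp add: dual_os_def g_fun_def u_def sum_distrib_left algebra_simps)
  also have "(\<Sum>j=1..?N. (u (j + 1) - 2 * u j + u (j - 1)) * gram_num j k)
      = u (?N + 1) * gram_num ?N k - u ?N * gram_num (?N + 1) k - (if k \<le> ?N then u k else 0)"
    using assms by (intro sum_second_difference_gram_num) (simp_all add: u_def)
  finally have sum_eq: "(\<Sum>j=1..?N + 1. gram_num j k * dual_os j x)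
      = ?c * (if k \<le> ?N then u k else 0) - ?c * gram_num ?N k + gram_num (?N + 1) k * (real ?N + 1)\<^sup>2"
    by (simp add: u_def algebra_simps)
  show ?thesis
  proof (cases "k \<le> ?N")
    case True
    then have "gram_num ?N k = real k * (real ?N + 1)" "gram_num (?N + 1) k = real k * (real ?N + 2)"
      by (simp_all add: gram_num_def algebra_simps)
    then show ?thesis using sum_eq True by (simp add: u_def algebra_simps power2_eq_square)
  next
    case False
    then have k: "k = ?N + 1" using assms by simp
    then have "gram_num ?N k = real ?N * (real ?N + 2)" "gram_num (?N + 1) k = (real ?N + 1) * (real ?N + 2)"
      by (simp_all add: gram_num_def algebra_simps)
    then show ?thesis using sum_eq k by (simp add: algebra_simps power2_eq_square)
  qed
qed

section \<open>Orthogonal projection onto \<open>V_L\<close>\<close>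

definition bounded_measurable :: "(real^'n \<Rightarrow> real) \<Rightarrow> bool" where
  "bounded_measurable \<phi> \<longleftrightarrow>
     \<phi> \<in> borel_measurable (lebesgue_on unit_cube) \<and> (\<exists>B. \<forall>x\<in>unit_cube. \<bar>\<phi> x\<bar> \<le> B)"

lemma bounded_measurable_const: "bounded_measurable (\<lambda>x. c)"
  unfolding bounded_measurable_def by auto

lemma bounded_measurable_os: "bounded_measurable (os k)"
proof -
  have "\<forall>x\<in>unit_cube. \<bar>os k x\<bar> \<le> 1" by (metis abs_of_nonneg os_bounds)
  then show ?thesis unfolding bounded_measurable_def by (blast intro: os_measurable)
qed

lemma bounded_measurable_add:
  assumes "bounded_measurable \<phi>" "bounded_measurable \<psi>"
  shows "bounded_measurable (\<lambda>x. \<phi> x + \<psi> x)"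
proof -
  obtain B C where "\<forall>x\<in>unit_cube. \<bar>\<phi> x\<bar> \<le> B" "\<forall>x\<in>unit_cube. \<bar>\<psi> x\<bar> \<le> C"
    using assms unfolding bounded_measurable_def by blast
  then have "\<forall>x\<in>unit_cube. \<bar>\<phi> x + \<psi> x\<bar> \<le> B + C"
    by (intro ballI order.trans[OF abs_triangle_ineq] add_mono) auto
  then show ?thesis using assms unfolding bounded_measurable_def by auto
qed

lemma bounded_measurable_mult:
  assumes "bounded_measurable \<phi>" "bounded_measurable \<psi>"
  shows "bounded_measurable (\<lambda>x. \<phi> x * \<psi> x)"
proof -
  obtain B C where "\<forall>x\<in>unit_cube. \<bar>\<phi> x\<bar> \<le> B" "\<forall>x\<in>unit_cube. \<bar>\<psi> x\<bar> \<le> C"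
    using assms unfolding bounded_measurable_def by blast
  then have "\<forall>x\<in>unit_cube. \<bar>\<phi> x * \<psi> x\<bar> \<le> B * C" by (auto simp: abs_mult intro!: mult_mono)
  then show ?thesis using assms unfolding bounded_measurable_def by auto
qed

lemma bounded_measurable_diff:
  assumes "bounded_measurable \<phi>" "bounded_measurable \<psi>"
  shows "bounded_measurable (\<lambda>x. \<phi> x - \<psi> x)"
  using bounded_measurable_add[OF assms(1) bounded_measurable_mult[OF bounded_measurable_const assms(2)], of "-1"]
  by simp

lemma bounded_measurable_V_L: "h \<in> V_L \<Longrightarrow> bounded_measurable h"
proof -
  have "bounded_measurable (\<lambda>x. \<Sum>j\<in>S. c j * os j x)" if "finite S" for S and c :: "nat \<Rightarrow> real"
    using that by (induction S rule: finite_induct)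
      (auto intro!: bounded_measurable_const bounded_measurable_add bounded_measurable_mult bounded_measurable_os)
  then show "h \<in> V_L \<Longrightarrow> bounded_measurable h" unfolding V_L_def by blast
qed

lemma bounded_measurable_integrable:
  assumes "bounded_measurable \<phi>"
  shows "integrable (lebesgue_on unit_cube) \<phi>"
proof -
  obtain B where meas: "\<phi> \<in> borel_measurable (lebesgue_on unit_cube)" and "\<forall>x\<in>unit_cube. \<bar>\<phi> x\<bar> \<le> B"
    using assms unfolding bounded_measurable_def by blast
  then show ?thesis
    by (intro finite_measure.integrable_const_bound[OF _ _ meas, of B])
       (auto simp: unit_cube_eq_cbox space_restrict_space intro: finite_measure_lebesgue_on)
qed

lemma L2_cube_mult_integrable:
  assumes "f \<in> L2_cube" "bounded_measurable \<phi>"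
  shows "integrable (lebesgue_on unit_cube) (\<lambda>x. f x * \<phi> x)"
proof -
  obtain B where meas: "\<phi> \<in> borel_measurable (lebesgue_on unit_cube)" and B: "\<forall>x\<in>unit_cube. \<bar>\<phi> x\<bar> \<le> B"
    using assms(2) unfolding bounded_measurable_def by blast
  \<comment> \<open>\<open>|f| \<le> 1 + f\<^sup>2\<close> makes a square integrable function integrable on the cube\<close>
  have "\<bar>f x\<bar> \<le> 1 + (f x)\<^sup>2" for x
  proof -
    have "0 \<le> (\<bar>f x\<bar> - 1)\<^sup>2" by simp
    then show ?thesis using zero_le_power2[of "f x"] by (simp add: power2_diff)
  qed
  have "\<bar>f x * \<phi> x\<bar> \<le> \<bar>B\<bar> * (1 + (f x)\<^sup>2)" if "x \<in> unit_cube" for x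
  proof -
    have "\<bar>\<phi> x\<bar> \<le> \<bar>B\<bar>" using B that by fastforce
    then have "\<bar>f x\<bar> * \<bar>\<phi> x\<bar> \<le> (1 + (f x)\<^sup>2) * \<bar>B\<bar>"
      using \<open>\<bar>f x\<bar> \<le> 1 + (f x)\<^sup>2\<close> by (intro mult_mono) auto
    then show ?thesis by (simp add: abs_mult mult.commute)
  qed
  then have bound: "AE x in lebesgue_on unit_cube. norm (f x * \<phi> x) \<le> norm (\<bar>B\<bar> * (1 + (f x)\<^sup>2))"
    by (intro AE_I2) (auto simp: space_restrict_space abs_mult)
  have dominant: "integrable (lebesgue_on unit_cube) (\<lambda>x. \<bar>B\<bar> * (1 + (f x)\<^sup>2))"
    using assms(1) bounded_measurable_integrable[OF bounded_measurable_const[of 1]]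
    by (intro integrable_mult_right Bochner_Integration.integrable_add) (auto simp: L2_cube_def)
  have "(\<lambda>x. f x * \<phi> x) \<in> borel_measurable (lebesgue_on unit_cube)"
    using assms(1) meas by (simp add: L2_cube_def borel_measurable_times)
  then show ?thesis by (rule Bochner_Integration.integrable_bound[OF dominant _ bound])
qed

lemma L2_inner_commute: "L2_inner u v = L2_inner v u"
  unfolding L2_inner_def by (simp add: mult.commute)

lemma L2_inner_sum_right:
  assumes "finite S" "\<And>j. j \<in> S \<Longrightarrow> integrable (lebesgue_on unit_cube) (\<lambda>x. \<phi> x * \<psi> j x)"
  shows "L2_inner \<phi> (\<lambda>x. \<Sum>j\<in>S. c j * \<psi> j x) = (\<Sum>j\<in>S. c j * L2_inner \<phi> (\<psi> j))"
proof -
  have "L2_inner \<phi> (\<lambda>x. \<Sum>j\<in>S. c j * \<psi> j x) = (\<integral>x. (\<Sum>j\<in>S. c j * (\<phi> x * \<psi> j x)) \<partial>lebesgue_on unit_cube)"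
    unfolding L2_inner_def by (simp add: sum_distrib_left mult_ac)
  also have "\<dots> = (\<Sum>j\<in>S. c j * L2_inner \<phi> (\<psi> j))"
    using assms by (subst Bochner_Integration.integral_sum) (auto simp: L2_inner_def)
  finally show ?thesis .
qed

lemma coef_eq_L2_inner_dual_os:
  fixes f :: "real^'n \<Rightarrow> real"
  assumes "f \<in> L2_cube"
  shows "coef f j = L2_inner f (dual_os j)"
proof (cases "j \<le> CARD('n)")
  case False
  let ?N = "CARD('n)"
  have "L2_inner f (dual_os j) = L2_inner f (\<lambda>x. \<Sum>m\<in>{0, ?N + 1}.
      (if m = 0 then - ((real ?N + 1) * (real ?N + 2)) else (real ?N + 1)\<^sup>2) * (if m = 0 then os ?N else (\<lambda>_. 1)) x)"
    using False by (simp add: dual_os_def algebra_simps)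
  also have "\<dots> = coef f j"
    using False assms L2_cube_mult_integrable[OF assms bounded_measurable_const[of 1]]
    by (subst L2_inner_sum_right)
       (auto intro: L2_cube_mult_integrable bounded_measurable_os bounded_measurable_const simp: coef_def)
  finally show ?thesis ..
qed (simp add: coef_def dual_os_def)

lemma L2_inner_projection_os:
  fixes f :: "real^'n \<Rightarrow> real"
  assumes "f \<in> L2_cube" "1 \<le> k" "k \<le> CARD('n) + 1"
  shows "L2_inner (\<lambda>x :: real^'n. \<Sum>j=1..CARD('n) + 1. coef f j * os j x) (os k) = L2_inner f (os k)"
proof -
  let ?N = "CARD('n)"
  let ?c = "(real ?N + 1) * (real ?N + 2)"
  have "L2_inner (\<lambda>x :: real^'n. \<Sum>j=1..?N + 1. coef f j * os j x) (os k)
      = L2_inner (os k :: real^'n \<Rightarrow> real) (\<lambda>x. \<Sum>j=1..?N + 1. coef f j * os j x)"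
    by (rule L2_inner_commute)
  also have "\<dots> = (\<Sum>j=1..?N + 1. coef f j * L2_inner (os k) (os j :: real^'n \<Rightarrow> real))"
    by (rule L2_inner_sum_right)
       (auto intro: bounded_measurable_integrable bounded_measurable_mult bounded_measurable_os)
  also have "\<dots> = (\<Sum>j=1..?N + 1. gram_num j k / ?c * L2_inner f (dual_os j))"
    using assms by (intro sum.cong refl)
      (simp add: L2_inner_os_os coef_eq_L2_inner_dual_os gram_num_def min.commute max.commute)
  also have "\<dots> = L2_inner f (\<lambda>x. \<Sum>j=1..?N + 1. gram_num j k / ?c * dual_os j x)"
    using assms(1) bounded_measurable_os
    by (subst L2_inner_sum_right)
       (auto simp: dual_os_def g_fun_def intro!: L2_cube_mult_integrable bounded_measurable_diff
         bounded_measurable_add bounded_measurable_mult bounded_measurable_const)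
  also have "(\<lambda>x :: real^'n. \<Sum>j=1..?N + 1. gram_num j k / ?c * dual_os j x) = os k"
  proof (rule ext)
    fix x :: "real^'n"
    have "(\<Sum>j=1..?N + 1. gram_num j k / ?c * dual_os j x) = (\<Sum>j=1..?N + 1. gram_num j k * dual_os j x) / ?c"
      by (simp add: sum_divide_distrib add_divide_distrib)
    then show "(\<Sum>j=1..?N + 1. gram_num j k / ?c * dual_os j x) = os k x"
      using sum_gram_num_dual_os[OF assms(2,3), of x] by simp
  qed
  finally show ?thesis .
qed

lemma L2_dist2_pythagoras:
  assumes f: "f \<in> L2_cube" and p: "bounded_measurable p" and h: "bounded_measurable h"
    and orth: "L2_inner f (\<lambda>x. p x - h x) = L2_inner p (\<lambda>x. p x - h x)"
  shows "L2_dist2 f h = L2_dist2 f p + L2_dist2 p h"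
proof -
  define d where "d x = p x - h x" for x
  have d: "bounded_measurable d" unfolding d_def using p h by (rule bounded_measurable_diff)
  have pointwise: "(f x - h x)\<^sup>2 = (f x)\<^sup>2 - 2 * (f x * p x) + p x * p x + 2 * (f x * d x - p x * d x) + d x * d x" for x
    by (simp add: d_def power2_eq_square algebra_simps)
  have split_fp: "(f x - p x)\<^sup>2 = (f x)\<^sup>2 - 2 * (f x * p x) + p x * p x" for x
    by (simp add: power2_eq_square algebra_simps)
  note integrable =
    L2_cube_mult_integrable[OF f p] L2_cube_mult_integrable[OF f d]
    bounded_measurable_integrable[OF bounded_measurable_mult[OF p p]]
    bounded_measurable_integrable[OF bounded_measurable_mult[OF p d]]
    bounded_measurable_integrable[OF bounded_measurable_mult[OF d d]]
  have sq: "integrable (lebesgue_on unit_cube) (\<lambda>x. (f x)\<^sup>2)" using f by (simp add: L2_cube_def)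
  have "L2_dist2 f h = L2_dist2 f p + 2 * (L2_inner f d - L2_inner p d) + L2_inner d d"
    unfolding L2_dist2_def L2_inner_def pointwise split_fp using integrable sq by simp
  moreover have "L2_inner d d = L2_dist2 p h"
    by (simp add: L2_inner_def L2_dist2_def d_def power2_eq_square)
  ultimately show ?thesis using orth by (simp add: d_def[abs_def])
qed

lemma L2_dist2_projection:
  fixes f :: "real^'n \<Rightarrow> real"
  assumes "f \<in> L2_cube" "h \<in> V_L"
  defines "P \<equiv> \<lambda>x. \<Sum>j=1..CARD('n) + 1. coef f j * os j x"
  shows "L2_dist2 f h = L2_dist2 f P + L2_dist2 P h"
proof (rule L2_dist2_pythagoras[OF assms(1)])
  let ?N = "CARD('n)"
  have "P \<in> V_L" unfolding P_def V_L_def by blast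
  then show "bounded_measurable P" "bounded_measurable h"
    using assms(2) by (simp_all add: bounded_measurable_V_L)
  obtain c where h: "h = (\<lambda>x. \<Sum>j=1..?N + 1. c j * os j x)" using assms(2) unfolding V_L_def by blast
  have diff: "(\<lambda>x. P x - h x) = (\<lambda>x. \<Sum>j=1..?N + 1. (coef f j - c j) * os j x)"
    by (simp add: P_def h sum_subtractf left_diff_distrib)
  have inner_diff: "L2_inner \<phi> (\<lambda>x. P x - h x) = (\<Sum>j=1..?N + 1. (coef f j - c j) * L2_inner \<phi> (os j))"
    if "bounded_measurable \<phi> \<or> \<phi> = f" for \<phi>
    unfolding diff using that assms(1)
    by (intro L2_inner_sum_right)
       (auto intro: L2_cube_mult_integrable bounded_measurable_integrable bounded_measurable_mult bounded_measurable_os)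
  have "L2_inner f (\<lambda>x. P x - h x) = (\<Sum>j=1..?N + 1. (coef f j - c j) * L2_inner f (os j))"
    by (rule inner_diff) simp
  also have "\<dots> = (\<Sum>j=1..?N + 1. (coef f j - c j) * L2_inner P (os j))"
  proof (intro sum.cong refl)
    fix j assume "j \<in> {1..?N + 1}"
    then have "L2_inner P (os j) = L2_inner f (os j)"
      unfolding P_def using assms(1) by (intro L2_inner_projection_os) auto
    then show "(coef f j - c j) * L2_inner f (os j) = (coef f j - c j) * L2_inner P (os j)" by simp
  qed
  also have "\<dots> = L2_inner P (\<lambda>x. P x - h x)"
    using \<open>bounded_measurable P\<close> by (intro inner_diff[symmetric]) simp
  finally show "L2_inner f (\<lambda>x. P x - h x) = L2_inner P (\<lambda>x. P x - h x)" .
qed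

lemma L2_dist2_eq_0_iff:
  assumes "bounded_measurable p" "bounded_measurable h"
  shows "L2_dist2 p h = 0 \<longleftrightarrow> (AE x in lebesgue_on unit_cube. h x = p x)"
proof -
  have "bounded_measurable (\<lambda>x. (p x - h x)\<^sup>2)"
    unfolding power2_eq_square using assms by (intro bounded_measurable_mult bounded_measurable_diff)
  then have "L2_dist2 p h = 0 \<longleftrightarrow> (AE x in lebesgue_on unit_cube. (p x - h x)\<^sup>2 = 0)"
    unfolding L2_dist2_def by (intro integral_nonneg_eq_0_iff_AE bounded_measurable_integrable) auto
  moreover have "(p x - h x)\<^sup>2 = 0 \<longleftrightarrow> h x = p x" for x by auto
  ultimately show ?thesis by simp
qed

theorem proposition2:
  fixes f :: "real^'n \<Rightarrow> real"
  assumes "f \<in> L2_cube"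
  shows "\<forall>g \<in> V_L. ((\<forall>h \<in> V_L. L2_dist2 f g \<le> L2_dist2 f h)
            \<longleftrightarrow> (AE x in lebesgue_on unit_cube.
                  g x = (\<Sum>j=1..CARD('n)+1. coef f j * os j x)))"
proof
  fix g :: "real^'n \<Rightarrow> real" assume g: "g \<in> V_L"
  define P where "P = (\<lambda>x::real^'n. \<Sum>j=1..CARD('n)+1. coef f j * os j x)"
  have P: "P \<in> V_L" unfolding P_def V_L_def by blast
  have split: "L2_dist2 f h = L2_dist2 f P + L2_dist2 P h" if "h \<in> V_L" for h
    unfolding P_def using assms that by (rule L2_dist2_projection)
  have "L2_dist2 P P = 0" by (simp add: L2_dist2_def)
  moreover have "0 \<le> L2_dist2 P h" for h by (simp add: L2_dist2_def)
  ultimately have "(\<forall>h \<in> V_L. L2_dist2 f g \<le> L2_dist2 f h) \<longleftrightarrow> L2_dist2 P g = 0"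
    using split g P by (smt (verit))
  also have "\<dots> \<longleftrightarrow> (AE x in lebesgue_on unit_cube. g x = P x)"
    using g P by (intro L2_dist2_eq_0_iff bounded_measurable_V_L)
  finally show "(\<forall>h \<in> V_L. L2_dist2 f g \<le> L2_dist2 f h)
      \<longleftrightarrow> (AE x in lebesgue_on unit_cube. g x = (\<Sum>j=1..CARD('n)+1. coef f j * os j x))"
    unfolding P_def .
qed

end
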